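(* Let $X$ be a complex Banach space, $J:X\to X^*$ a duality section, and $x\in X$ a unit vector such that for every unit vector $y\neq x$ one has $\|x+y\|<2$. If $T=\{e^{tA}:t\ge 0\}$ is a $(C_0)$ contraction semigroup with generator $A$ and $\lim_{t\to\infty}|\langle T(t)x,J(x)\rangle|=1$, then $x$ is in the domain of $A$ and $Ax=i\lambda x$ for some real $\lambda$.
   Context: For a complex Banach space $X$, a functional $x^*\in X^*$ is called dual to $x\in X$ if $\langle x,x^*\rangle = \|x^*\|\|x\| = \|x^*\|^2=\|x\|^2$. A map $J:X\to X^*$ is a duality section if $J(x)$ is dual to $x$ for every $x\in X$. *)

theory Defs
  imports "HOL-Analysis.Analysis"
begin

class complex_vector = real_vector +
  fixes scaleC :: "complex \<Rightarrow> 'a \<Rightarrow> 'a" (infixr "*\<^sub>C" 75)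
  assumes scaleC_add_right: "a *\<^sub>C (x + y) = a *\<^sub>C x + a *\<^sub>C y"
    and scaleC_add_left: "(a + b) *\<^sub>C x = a *\<^sub>C x + b *\<^sub>C x"
    and scaleC_scaleC: "a *\<^sub>C (b *\<^sub>C x) = (a * b) *\<^sub>C x"
    and scaleC_one: "1 *\<^sub>C x = x"
    and scaleR_scaleC: "r *\<^sub>R x = complex_of_real r *\<^sub>C x"

class complex_normed_vector = complex_vector + real_normed_vector +
  assumes norm_scaleC: "norm (a *\<^sub>C x) = cmod a * norm x"

instantiation complex :: complex_normed_vector
begin
definition scaleC_complex_def: "scaleC a (x::complex) = a * x"
instance
  by standard (auto simp: scaleC_complex_def algebra_simps scaleR_conv_of_real norm_mult)
end

text \<open>Bounded complex-linear maps; the dual space consists of the bounded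
  complex-linear functionals X \<Rightarrow> complex, normed by the operator norm onorm.\<close>

definition bounded_clinear ::
  "('a::complex_normed_vector \<Rightarrow> 'b::complex_normed_vector) \<Rightarrow> bool" where
  "bounded_clinear f \<longleftrightarrow>
     (\<forall>x y. f (x + y) = f x + f y) \<and>
     (\<forall>c x. f (c *\<^sub>C x) = c *\<^sub>C f x) \<and>
     (\<exists>K. \<forall>x. norm (f x) \<le> norm x * K)"

definition dual_to :: "('a::complex_normed_vector \<Rightarrow> complex) \<Rightarrow> 'a \<Rightarrow> bool" where
  "dual_to xs x \<longleftrightarrow>
     bounded_clinear xs \<and>
     xs x = complex_of_real (onorm xs * norm x) \<and>
     onorm xs * norm x = (onorm xs)\<^sup>2 \<and>
     (onorm xs)\<^sup>2 = (norm x)\<^sup>2"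

definition duality_section :: "('a::complex_normed_vector \<Rightarrow> ('a \<Rightarrow> complex)) \<Rightarrow> bool" where
  "duality_section J \<longleftrightarrow> (\<forall>x. dual_to (J x) x)"

text \<open>(C_0) contraction semigroup, indexed by t \<ge> 0 (values at t < 0 irrelevant).\<close>

definition C0_contraction_semigroup ::
  "(real \<Rightarrow> 'a::complex_normed_vector \<Rightarrow> 'a) \<Rightarrow> bool" where
  "C0_contraction_semigroup T \<longleftrightarrow>
     (\<forall>t\<ge>0. bounded_clinear (T t)) \<and>
     T 0 = id \<and>
     (\<forall>s\<ge>0. \<forall>t\<ge>0. T (s + t) = T s \<circ> T t) \<and>
     (\<forall>x. ((\<lambda>t. T t x) \<longlongrightarrow> x) (at_right 0)) \<and>
     (\<forall>t\<ge>0. onorm (T t) \<le> 1)"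

text \<open>Generator: x \<in> D(A) and A x = y iff (T h x - x)/h \<rightarrow> y as h \<rightarrow> 0+.\<close>

definition generator_at :: "(real \<Rightarrow> 'a::complex_normed_vector \<Rightarrow> 'a) \<Rightarrow> 'a \<Rightarrow> 'a \<Rightarrow> bool" where
  "generator_at T x y \<longleftrightarrow> ((\<lambda>h. (1 / h) *\<^sub>R (T h x - x)) \<longlongrightarrow> y) (at_right 0)"

end

theory Submission
  imports Defs
begin

text \<open>Let \<phi> = J x. For s \<ge> 0 and large t, aligning the phases of \<phi>(T t x) and
  \<phi>(T (s + t) x) = \<phi>(T t (T s x)) gives a unimodular c with
  |\<phi>(T t x)| + |\<phi>(T (s + t) x)| \<le> \<parallel>x + c T s x\<parallel>, so the maximum of \<parallel>x + c T s x\<parallel> over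
  the unit circle is 2. Since x is a point of strict convexity of the unit sphere, this forces
  T s x = u(s) x with |u(s)| = 1. The scalar function u is a continuous unimodular semigroup,
  hence right differentiable at 0 with purely imaginary derivative \<i>\<lambda>, and A x = \<i>\<lambda> x.\<close>

lemma scaleC_diff_left: "(a - b) *\<^sub>C x = a *\<^sub>C x - b *\<^sub>C (x::'a::complex_vector)"
  using scaleC_add_left[of "a - b" b x] by (simp add: eq_diff_eq)

lemma scaleC_cancel_right:
  fixes x :: "'a::complex_normed_vector"
  assumes "x \<noteq> 0"
  shows "a *\<^sub>C x = b *\<^sub>C x \<longleftrightarrow> a = b"
proof
  assume "a *\<^sub>C x = b *\<^sub>C x"
  then have "norm ((a - b) *\<^sub>C x) = 0" by (simp add: scaleC_diff_left)
  then show "a = b" using assms by (simp add: norm_scaleC)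
qed simp

lemma bounded_linear_scaleC_left: "bounded_linear (\<lambda>c. c *\<^sub>C (x::'a::complex_normed_vector))"
proof (rule bounded_linear_intro)
  show "(b + c) *\<^sub>C x = b *\<^sub>C x + c *\<^sub>C x" for b c by (rule scaleC_add_left)
  show "(r *\<^sub>R c) *\<^sub>C x = r *\<^sub>R (c *\<^sub>C x)" for r c
    by (simp add: scaleR_conv_of_real scaleR_scaleC scaleC_scaleC)
  show "norm (c *\<^sub>C x) \<le> norm c * norm x" for c by (simp add: norm_scaleC)
qed

lemma bounded_clinear_add: "bounded_clinear f \<Longrightarrow> f (x + y) = f x + f y"
  unfolding bounded_clinear_def by simp

lemma bounded_clinear_scaleC: "bounded_clinear f \<Longrightarrow> f (c *\<^sub>C x) = c *\<^sub>C f x"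
  unfolding bounded_clinear_def by simp

lemma bounded_clinear_imp_bounded_linear:
  assumes "bounded_clinear f"
  shows "bounded_linear f"
proof -
  obtain K where "\<And>x. norm (f x) \<le> norm x * K" using assms unfolding bounded_clinear_def by blast
  then show ?thesis
    using assms by (intro bounded_linear_intro) (auto simp: bounded_clinear_def scaleR_scaleC)
qed

lemma bounded_clinear_norm_le:
  assumes "bounded_clinear f" and "onorm f \<le> 1"
  shows "norm (f z) \<le> norm z"
proof -
  have "norm (f z) \<le> onorm f * norm z"
    by (rule onorm[OF bounded_clinear_imp_bounded_linear[OF assms(1)]])
  also have "\<dots> \<le> norm z" using mult_right_mono[OF assms(2), of "norm z"] by simp
  finally show ?thesis .
qed

lemma dual_to_onorm: "dual_to \<phi> x \<Longrightarrow> onorm \<phi> = norm x"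
  unfolding dual_to_def
  using onorm_pos_le[OF bounded_clinear_imp_bounded_linear] by (metis norm_ge_zero power2_eq_iff_nonneg)

lemma contraction_semigroup_norm_le:
  "C0_contraction_semigroup T \<Longrightarrow> t \<ge> 0 \<Longrightarrow> norm (T t z) \<le> norm z"
  unfolding C0_contraction_semigroup_def by (blast intro: bounded_clinear_norm_le)

lemma has_vector_derivative_iff_tendsto:
  "(f has_vector_derivative f') (at x within S) \<longleftrightarrow>
     ((\<lambda>y. (1 / (y - x)) *\<^sub>R (f y - f x)) \<longlongrightarrow> f') (at x within S)"
proof -
  have "norm (f y - f x - (y - x) *\<^sub>R f') / norm (y - x) = norm ((1 / (y - x)) *\<^sub>R (f y - f x) - f')"
    if "y \<noteq> x" for y
  proof -
    have "(1 / (y - x)) *\<^sub>R (f y - f x) - f' = (1 / (y - x)) *\<^sub>R (f y - f x - (y - x) *\<^sub>R f')"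
      using that by (simp add: scaleR_diff_right)
    then show ?thesis by simp
  qed
  then have "((\<lambda>y. norm (f y - f x - (y - x) *\<^sub>R f') / norm (y - x)) \<longlongrightarrow> 0) (at x within S) \<longleftrightarrow>
      ((\<lambda>y. norm ((1 / (y - x)) *\<^sub>R (f y - f x) - f')) \<longlongrightarrow> 0) (at x within S)"
    by (intro filterlim_cong refl) (auto simp: eventually_at_filter)
  then show ?thesis
    unfolding has_vector_derivative_def has_derivative_iff_norm tendsto_norm_zero_iff
    by (simp add: bounded_linear_scaleR_left LIM_zero_iff)
qed

lemma semigroup_has_right_derivative:
  fixes u :: "real \<Rightarrow> 'a::{real_normed_field, banach}"
  assumes cont: "continuous_on {0..} u"
    and u0: "u 0 = 1"
    and mult: "\<And>s t. s \<ge> 0 \<Longrightarrow> t \<ge> 0 \<Longrightarrow> u (s + t) = u s * u t"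
  shows "\<exists>\<mu>. (u has_vector_derivative \<mu>) (at_right 0)"
proof -
  define U where "U r = integral {0..r} u" for r
  have U': "(U has_vector_derivative u r) (at r within {0..2})" if "r \<in> {0..2}" for r
    unfolding U_def using that continuous_on_subset[OF cont]
    by (intro integral_has_vector_derivative) auto
  have at_0: "at (0::real) within {0..1} = at_right 0"
    by (simp add: at_within_Icc_at_right)
  then have nontrivial: "at (0::real) within {0..1} \<noteq> bot"
    using trivial_limit_at_right_real by simp
  have U_at_0: "(U has_vector_derivative u 0) (at 0 within {0..1})"
    by (rule has_vector_derivative_within_subset[OF U']) auto
  have "\<exists>\<delta>\<in>{0<..1}. U \<delta> \<noteq> 0"
  proof (rule ccontr)
    assume "\<not> ?thesis"
    then have U_zero: "U h = 0" if "h \<in> {0..1}" for h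
      using that by (cases "h = 0") (auto simp: U_def)
    have "(U has_vector_derivative 0) (at 0 within {0..1})"
      by (rule has_vector_derivative_transform[where f = "\<lambda>_. 0"]) (auto simp: U_zero)
    with U_at_0 u0 show False
      using vector_derivative_unique_within[OF nontrivial] by force
  qed
  then obtain \<delta> where \<delta>: "0 < \<delta>" "\<delta> \<le> 1" and c: "U \<delta> \<noteq> 0" by auto
  \<comment> \<open>So u h = (U (h + \<delta>) - U h) / U \<delta> inherits the differentiability of the antiderivative U.\<close>
  have shifted: "U (h + \<delta>) - U h = u h * U \<delta>" if "0 \<le> h" for h
  proof -
    have "continuous_on {0..h + \<delta>} u" using cont by (rule continuous_on_subset) auto
    then have "U h + integral {h..h + \<delta>} u = U (h + \<delta>)"
      unfolding U_def using that \<delta>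
      by (intro Henstock_Kurzweil_Integration.integral_combine integrable_continuous_real) auto
    moreover have "integral {h..h + \<delta>} u = integral {0..\<delta>} (u \<circ> (+) h)"
      using integral_shift_Icc_real[of 0 \<delta> u h] by (simp add: add.commute)
    moreover have "integral {0..\<delta>} (u \<circ> (+) h) = integral {0..\<delta>} (\<lambda>s. u h * u s)"
      using that mult by (intro integral_cong) auto
    ultimately show ?thesis by (simp add: U_def algebra_simps)
  qed
  have "(U has_vector_derivative u \<delta>) (at \<delta> within (\<lambda>h. h + \<delta>) ` {0..1})"
    using \<delta> by (intro has_vector_derivative_within_subset[OF U']) auto
  then have "((\<lambda>h. U (h + \<delta>)) has_vector_derivative u \<delta>) (at 0 within {0..1})"
    using vector_diff_chain_within[of "\<lambda>h. h + \<delta>" 1 0 "{0..1}" U "u \<delta>"]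
    by (simp add: o_def has_vector_derivative_add_const)
  then have "((\<lambda>h. (U (h + \<delta>) - U h) / U \<delta>) has_vector_derivative (u \<delta> - u 0) / U \<delta>) (at 0 within {0..1})"
    by (intro bounded_linear.has_vector_derivative[OF bounded_linear_divide] has_vector_derivative_diff U_at_0)
  then have "(u has_vector_derivative (u \<delta> - u 0) / U \<delta>) (at 0 within {0..1})"
    by (rule has_vector_derivative_transform[rotated 2]) (use shifted c in auto)
  then show ?thesis using at_0 by auto
qed

lemma unimodular_has_vector_derivative_orthogonal:
  fixes u :: "real \<Rightarrow> complex"
  assumes "\<And>h. h \<in> S \<Longrightarrow> cmod (u h) = 1" and "x \<in> S" and "at x within S \<noteq> bot"
    and "(u has_vector_derivative \<mu>) (at x within S)"
  shows "Re (cnj (u x) * \<mu>) = 0"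
proof -
  have "((\<lambda>h. u h * cnj (u h)) has_vector_derivative u x * cnj \<mu> + \<mu> * cnj (u x)) (at x within S)"
    by (intro bounded_bilinear.has_vector_derivative[OF bounded_bilinear_mult] has_vector_derivative_cnj assms)
  moreover have "((\<lambda>h. u h * cnj (u h)) has_vector_derivative 0) (at x within S)"
    by (rule has_vector_derivative_transform[of x S _ "\<lambda>_. 1"])
       (use assms in \<open>auto simp: complex_norm_square[symmetric]\<close>)
  ultimately have "u x * cnj \<mu> + \<mu> * cnj (u x) = 0"
    using vector_derivative_unique_within assms(3) by blast
  then have "Re (u x * cnj \<mu> + \<mu> * cnj (u x)) = 0" by simp
  then show ?thesis by (simp add: algebra_simps)
qed

lemma unimodular_semigroup_continuous_on:
  fixes u :: "real \<Rightarrow> complex"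
  assumes unimodular: "\<And>s. s \<ge> 0 \<Longrightarrow> cmod (u s) = 1"
    and mult: "\<And>s t. s \<ge> 0 \<Longrightarrow> t \<ge> 0 \<Longrightarrow> u (s + t) = u s * u t"
    and u0: "u 0 = 1"
    and lim: "(u \<longlongrightarrow> 1) (at_right 0)"
  shows "continuous_on {0..} u"
  unfolding continuous_on_iff
proof (intro ballI allI impI)
  fix t e :: real assume "t \<in> {0..}" "e > 0"
  have dist_shift: "dist (u s) (u t) = dist (u \<bar>s - t\<bar>) 1" if "s \<ge> 0" "t \<ge> 0" for s t
  proof -
    have "dist (u (t + h)) (u t) = dist (u h) 1" if "t \<ge> 0" "h \<ge> 0" for t h
    proof -
      have "u (t + h) - u t = u t * (u h - 1)" using mult[OF that] by (simp add: algebra_simps)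
      then show ?thesis using unimodular[OF that(1)] by (simp add: dist_norm norm_mult)
    qed
    from this[of t "s - t"] this[of s "t - s"] that show ?thesis
      by (cases "t \<le> s") (auto simp: dist_commute)
  qed
  have "\<forall>\<^sub>F h in at_right 0. dist (u h) 1 < e" using lim \<open>e > 0\<close> by (rule tendstoD)
  then obtain d where "d > 0" and d: "\<And>h. 0 < h \<Longrightarrow> h < d \<Longrightarrow> dist (u h) 1 < e"
    by (auto simp: eventually_at_right_field)
  have "dist (u s) (u t) < e" if "s \<ge> 0" "dist s t < d" for s
    using dist_shift[OF that(1)] d[of "\<bar>s - t\<bar>"] \<open>t \<in> {0..}\<close> that \<open>e > 0\<close> u0
    by (cases "s = t") (auto simp: dist_real_def)
  then show "\<exists>d>0. \<forall>s\<in>{0..}. dist s t < d \<longrightarrow> dist (u s) (u t) < e"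
    using \<open>d > 0\<close> by auto
qed

lemma exists_unimodular_norm_add:
  fixes a b :: complex
  shows "\<exists>c. cmod c = 1 \<and> cmod (a + c * b) = cmod a + cmod b"
proof (cases "a = 0 \<or> b = 0")
  case True
  then show ?thesis by (intro exI[of _ 1]) auto
next
  case False
  have "a + sgn a * cnj (sgn b) * b = sgn a * of_real (cmod a + cmod b)"
    by (simp add: sgn_eq complex_norm_square[symmetric] power2_eq_square algebra_simps)
  then have "cmod (a + sgn a * cnj (sgn b) * b) = cmod a + cmod b"
    using False by (simp only: norm_mult norm_of_real) (simp add: norm_sgn)
  then show ?thesis
    using False by (intro exI[of _ "sgn a * cnj (sgn b)"]) (simp add: norm_mult norm_sgn)
qed

lemma norm_add_scaleC_attains_max:
  fixes x y :: "'a::complex_normed_vector"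
  shows "\<exists>c0. cmod c0 = 1 \<and> (\<forall>c. cmod c = 1 \<longrightarrow> norm (x + c *\<^sub>C y) \<le> norm (x + c0 *\<^sub>C y))"
proof -
  have "continuous_on (sphere 0 1) (\<lambda>c. c *\<^sub>C y)"
    by (rule linear_continuous_on[OF bounded_linear_scaleC_left])
  then have "continuous_on (sphere 0 1) (\<lambda>c. norm (x + c *\<^sub>C y))"
    by (intro continuous_on_norm continuous_on_add continuous_on_const)
  moreover have "sphere (0::complex) 1 \<noteq> {}" using norm_one by fastforce
  ultimately obtain c0 where "c0 \<in> sphere 0 1" "\<forall>c\<in>sphere 0 1. norm (x + c *\<^sub>C y) \<le> norm (x + c0 *\<^sub>C y)"
    using continuous_attains_sup[OF compact_sphere] by blast
  then show ?thesis by auto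
qed

lemma semigroup_orbit_phase_norm_ge_2:
  fixes T :: "real \<Rightarrow> 'a::complex_normed_vector \<Rightarrow> 'a"
  assumes T: "C0_contraction_semigroup T"
    and \<phi>: "bounded_clinear \<phi>" "\<And>z. cmod (\<phi> z) \<le> norm z"
    and lim: "((\<lambda>t. cmod (\<phi> (T t x))) \<longlongrightarrow> 1) at_top"
    and s: "s \<ge> 0"
  shows "\<exists>c. cmod c = 1 \<and> 2 \<le> norm (x + c *\<^sub>C T s x)"
proof -
  obtain c0 where c0: "cmod c0 = 1"
    and max: "\<And>c. cmod c = 1 \<Longrightarrow> norm (x + c *\<^sub>C T s x) \<le> norm (x + c0 *\<^sub>C T s x)"
    using norm_add_scaleC_attains_max by blast
  have "filterlim (\<lambda>t. s + t) at_top at_top"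
    by (rule filterlim_tendsto_add_at_top[OF tendsto_const filterlim_ident])
  then have "((\<lambda>t. cmod (\<phi> (T (s + t) x))) \<longlongrightarrow> 1) at_top"
    using filterlim_compose[OF lim] by blast
  with lim have sum_lim: "((\<lambda>t. cmod (\<phi> (T t x)) + cmod (\<phi> (T (s + t) x))) \<longlongrightarrow> 2) at_top"
    using tendsto_add by fastforce
  have "cmod (\<phi> (T t x)) + cmod (\<phi> (T (s + t) x)) \<le> norm (x + c0 *\<^sub>C T s x)" if t: "t \<ge> 0" for t
  proof -
    obtain c where c: "cmod c = 1"
      and aligned: "cmod (\<phi> (T t x) + c * \<phi> (T (s + t) x)) = cmod (\<phi> (T t x)) + cmod (\<phi> (T (s + t) x))"
      using exists_unimodular_norm_add by blast
    have "T (t + s) = T t \<circ> T s"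
      using T t s unfolding C0_contraction_semigroup_def by blast
    then have "T (s + t) x = T t (T s x)" by (simp add: add.commute)
    then have "\<phi> (T t (x + c *\<^sub>C T s x)) = \<phi> (T t x) + c * \<phi> (T (s + t) x)"
      using T t \<phi>(1) unfolding C0_contraction_semigroup_def
      by (simp add: bounded_clinear_add bounded_clinear_scaleC scaleC_complex_def)
    then have "cmod (\<phi> (T t x)) + cmod (\<phi> (T (s + t) x)) \<le> norm (T t (x + c *\<^sub>C T s x))"
      using aligned \<phi>(2) by metis
    also have "\<dots> \<le> norm (x + c *\<^sub>C T s x)" using T t by (rule contraction_semigroup_norm_le)
    also have "\<dots> \<le> norm (x + c0 *\<^sub>C T s x)" using c by (rule max)
    finally show ?thesis .
  qed
  then have "2 \<le> norm (x + c0 *\<^sub>C T s x)"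
    by (intro tendsto_le[OF trivial_limit_at_top_linorder tendsto_const sum_lim])
       (auto intro: eventually_mono[OF eventually_ge_at_top[of 0]])
  with c0 show ?thesis by blast
qed

lemma eq_if_norm_add_ge_2:
  fixes x z :: "'a::real_normed_vector"
  assumes "norm x = 1" and strict: "\<forall>y. norm y = 1 \<and> y \<noteq> x \<longrightarrow> norm (x + y) < 2"
    and "norm z \<le> 1" and "2 \<le> norm (x + z)"
  shows "z = x"
proof -
  have "norm z = 1" using norm_triangle_ineq[of x z] assms by linarith
  then show ?thesis using strict assms(4) by fastforce
qed

lemma semigroup_orbit_unimodular:
  fixes T :: "real \<Rightarrow> 'a::complex_normed_vector \<Rightarrow> 'a"
  assumes T: "C0_contraction_semigroup T"
    and \<phi>: "bounded_clinear \<phi>" "\<And>z. cmod (\<phi> z) \<le> norm z"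
    and lim: "((\<lambda>t. cmod (\<phi> (T t x))) \<longlongrightarrow> 1) at_top"
    and x: "norm x = 1" "\<forall>y. norm y = 1 \<and> y \<noteq> x \<longrightarrow> norm (x + y) < 2"
    and s: "s \<ge> 0"
  shows "\<exists>c. cmod c = 1 \<and> T s x = c *\<^sub>C x"
proof -
  obtain c where c: "cmod c = 1" and "2 \<le> norm (x + c *\<^sub>C T s x)"
    using semigroup_orbit_phase_norm_ge_2[OF T \<phi> lim s] by blast
  moreover have "norm (c *\<^sub>C T s x) \<le> 1"
    using contraction_semigroup_norm_le[OF T s, of x] c x by (simp add: norm_scaleC)
  ultimately have "c *\<^sub>C T s x = x" using eq_if_norm_add_ge_2 x by blast
  then have "(cnj c * c) *\<^sub>C T s x = cnj c *\<^sub>C x" by (metis scaleC_scaleC)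
  moreover have "cnj c * c = 1" using c by (simp add: complex_norm_square[symmetric] mult.commute)
  ultimately show ?thesis using c by (intro exI[of _ "cnj c"]) (simp add: scaleC_one)
qed

lemma eigenvalue_semigroup:
  fixes T :: "real \<Rightarrow> 'a::complex_normed_vector \<Rightarrow> 'a"
  assumes T: "C0_contraction_semigroup T" and "x \<noteq> 0"
    and u: "\<And>s. s \<ge> 0 \<Longrightarrow> T s x = u s *\<^sub>C x"
  shows "u 0 = 1"
    and "\<And>s t. s \<ge> 0 \<Longrightarrow> t \<ge> 0 \<Longrightarrow> u (s + t) = u s * u t"
    and "(u \<longlongrightarrow> 1) (at_right 0)"
proof -
  have "u 0 *\<^sub>C x = 1 *\<^sub>C x"
    using u[of 0] T by (simp add: C0_contraction_semigroup_def scaleC_one)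
  then show "u 0 = 1" by (simp add: scaleC_cancel_right[OF \<open>x \<noteq> 0\<close>])
  show "u (s + t) = u s * u t" if "s \<ge> 0" "t \<ge> 0" for s t
  proof -
    have "u (s + t) *\<^sub>C x = T s (T t x)"
      using u[of "s + t"] T that by (simp add: C0_contraction_semigroup_def)
    also have "\<dots> = u t *\<^sub>C T s x"
      using u[of t] T that by (simp add: C0_contraction_semigroup_def bounded_clinear_scaleC)
    also have "\<dots> = (u s * u t) *\<^sub>C x"
      using u[of s] that by (simp add: scaleC_scaleC mult.commute)
    finally show ?thesis by (simp add: scaleC_cancel_right[OF \<open>x \<noteq> 0\<close>])
  qed
  have "((\<lambda>h. T h x - x) \<longlongrightarrow> 0) (at_right 0)"
    using T by (simp add: C0_contraction_semigroup_def LIM_zero)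
  then have "((\<lambda>h. norm (T h x - x) / norm x) \<longlongrightarrow> 0) (at_right 0)"
    by (intro tendsto_divide_zero tendsto_norm_zero)
  moreover have "\<forall>\<^sub>F h in at_right 0. norm (T h x - x) / norm x = cmod (u h - 1)"
    using eventually_at_right_less
  proof eventually_elim
    case (elim h)
    have "T h x - x = (u h - 1) *\<^sub>C x" using u[of h] elim by (simp add: scaleC_diff_left scaleC_one)
    then show ?case using \<open>x \<noteq> 0\<close> by (simp add: norm_scaleC)
  qed
  ultimately have "((\<lambda>h. cmod (u h - 1)) \<longlongrightarrow> 0) (at_right 0)"
    by (rule Lim_transform_eventually)
  then show "(u \<longlongrightarrow> 1) (at_right 0)"
    by (simp add: tendsto_norm_zero_iff LIM_zero_iff)
qed

lemma generator_at_iff_has_vector_derivative: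
  assumes "T 0 x = x"
  shows "generator_at T x y \<longleftrightarrow> ((\<lambda>h. T h x) has_vector_derivative y) (at_right 0)"
  unfolding generator_at_def has_vector_derivative_iff_tendsto using assms by simp

lemma generator_at_eigenvector:
  fixes T :: "real \<Rightarrow> 'a::complex_normed_vector \<Rightarrow> 'a"
  assumes T: "C0_contraction_semigroup T"
    and u: "\<And>s. s \<ge> 0 \<Longrightarrow> T s x = u s *\<^sub>C x"
    and \<mu>: "(u has_vector_derivative \<mu>) (at_right 0)"
  shows "generator_at T x (\<mu> *\<^sub>C x)"
proof -
  have "((\<lambda>h. u h *\<^sub>C x) has_vector_derivative \<mu> *\<^sub>C x) (at 0 within {0..})"
    using bounded_linear.has_vector_derivative[OF bounded_linear_scaleC_left \<mu>]
    by (simp add: at_within_Ici_at_right)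
  then have "((\<lambda>h. T h x) has_vector_derivative \<mu> *\<^sub>C x) (at 0 within {0..})"
    by (rule has_vector_derivative_transform[rotated 2]) (auto simp: u)
  moreover have "T 0 x = x" using T by (simp add: C0_contraction_semigroup_def)
  ultimately show ?thesis
    by (simp add: generator_at_iff_has_vector_derivative at_within_Ici_at_right)
qed

theorem mainTheorem3:
  fixes J :: "'a::{complex_normed_vector, banach} \<Rightarrow> ('a \<Rightarrow> complex)"
    and T :: "real \<Rightarrow> 'a \<Rightarrow> 'a"
    and x :: 'a
  assumes "duality_section J"
    and "norm x = 1"
    and "\<forall>y. norm y = 1 \<and> y \<noteq> x \<longrightarrow> norm (x + y) < 2"
    and "C0_contraction_semigroup T"
    and "((\<lambda>t. cmod (J x (T t x))) \<longlongrightarrow> 1) at_top"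
  shows "\<exists>l::real. generator_at T x ((\<i> * complex_of_real l) *\<^sub>C x)"
proof -
  have "dual_to (J x) x" using assms(1) unfolding duality_section_def by blast
  then have \<phi>: "bounded_clinear (J x)" "\<And>z. cmod (J x z) \<le> norm z"
    using assms(2) dual_to_onorm by (auto simp: dual_to_def intro: bounded_clinear_norm_le)
  have "\<forall>s. \<exists>c. s \<ge> 0 \<longrightarrow> cmod c = 1 \<and> T s x = c *\<^sub>C x"
    using semigroup_orbit_unimodular[OF assms(4) \<phi> assms(5) assms(2,3)] by blast
  then obtain u where u: "\<And>s. s \<ge> 0 \<Longrightarrow> cmod (u s) = 1" "\<And>s. s \<ge> 0 \<Longrightarrow> T s x = u s *\<^sub>C x"
    by metis
  have "x \<noteq> 0" using assms(2) by auto
  note eigenvalue = eigenvalue_semigroup[OF assms(4) this u(2)]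
  have "continuous_on {0..} u"
    by (rule unimodular_semigroup_continuous_on[OF u(1) eigenvalue(2,1,3)])
  then obtain \<mu> where \<mu>: "(u has_vector_derivative \<mu>) (at_right 0)"
    using semigroup_has_right_derivative eigenvalue(1,2) by blast
  have "Re \<mu> = 0"
    using unimodular_has_vector_derivative_orthogonal[of "{0..}" u 0 \<mu>] u(1) eigenvalue(1) \<mu>
    by (simp add: at_within_Ici_at_right)
  then have "\<mu> = \<i> * complex_of_real (Im \<mu>)" by (simp add: complex_eq_iff)
  moreover have "generator_at T x (\<mu> *\<^sub>C x)" by (rule generator_at_eigenvector[OF assms(4) u(2) \<mu>])
  ultimately show ?thesis by metis
qed

end
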